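(* Fix $0<\epsilon<1$. Let $A\in\mathbb{R}^{m\times n}$ have i.i.d. $\mathcal{N}(0,1/m)$ entries with rows $\{a_\ell\}_{\ell=1}^m$, and let $Z$ be a $k$-dimensional subspace of $\mathbb{R}^n$. Let $E_{Z,A}$ be the event that there exists a set $Z_0\subset Z$ such that: each $z_0\in Z_0$ satisfies $\langle a_\ell,z_0\rangle\neq0$ for all $\ell\in[m]$; $|Z_0|\leqslant10m^{2k}$; and for all $z\in Z$ with $\|z\|=1$ there exists $z_0\in Z_0$ with $\|z-z_0\|\leqslant\epsilon$. There are positive absolute constants $C_2,c$ and a constant $\hat C$ depending polynomially on $\epsilon^{-1}$ such that if $m\geqslant\hat Ck$, then $\mathbb{P}(E_{Z,A})\geqslant1-C_2\exp(-c\epsilon m)$. *)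

theory Defs
  imports "HOL-Probability.Probability"
begin

text \<open>Vectors of R^n are modelled as functions nat => real vanishing outside {..<n}.\<close>

definition Rn :: "nat \<Rightarrow> (nat \<Rightarrow> real) set" where
  "Rn n = {x. \<forall>i\<ge>n. x i = 0}"

definition vinner :: "nat \<Rightarrow> (nat \<Rightarrow> real) \<Rightarrow> (nat \<Rightarrow> real) \<Rightarrow> real" where
  "vinner n x y = (\<Sum>i<n. x i * y i)"

definition vnorm :: "nat \<Rightarrow> (nat \<Rightarrow> real) \<Rightarrow> real" where
  "vnorm n x = sqrt (\<Sum>i<n. (x i)\<^sup>2)"

definition subspace_dim :: "nat \<Rightarrow> nat \<Rightarrow> (nat \<Rightarrow> real) set \<Rightarrow> bool" where
  "subspace_dim n k Z \<longleftrightarrow>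
     (\<exists>v :: nat \<Rightarrow> nat \<Rightarrow> real.
        (\<forall>j<k. v j \<in> Rn n) \<and>
        (\<forall>c :: nat \<Rightarrow> real. (\<forall>i. (\<Sum>j<k. c j * v j i) = 0) \<longrightarrow> (\<forall>j<k. c j = 0)) \<and>
        Z = {z. \<exists>c :: nat \<Rightarrow> real. z = (\<lambda>i. \<Sum>j<k. c j * v j i)})"

text \<open>The random m x n matrix A with i.i.d. N(0,1/m) entries (standard deviation 1/sqrt m),
  as a product measure over the index set {..<m} x {..<n}; row l is (\<lambda>j. A (l,j)).\<close>

definition gauss_matrix :: "nat \<Rightarrow> nat \<Rightarrow> (nat \<times> nat \<Rightarrow> real) measure" where
  "gauss_matrix m n =
     PiM ({..<m} \<times> {..<n}) (\<lambda>_. density lborel (normal_density 0 (1 / sqrt (real m))))"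

definition event_E :: "real \<Rightarrow> nat \<Rightarrow> nat \<Rightarrow> nat \<Rightarrow> (nat \<Rightarrow> real) set \<Rightarrow> (nat \<times> nat \<Rightarrow> real) \<Rightarrow> bool" where
  "event_E \<epsilon> m n k Z A \<longleftrightarrow>
     (\<exists>Z0. Z0 \<subseteq> Z \<and> finite Z0 \<and>
        (\<forall>z0\<in>Z0. \<forall>l<m. vinner n (\<lambda>j. A (l, j)) z0 \<noteq> 0) \<and>
        real (card Z0) \<le> 10 * real m ^ (2 * k) \<and>
        (\<forall>z\<in>Z. vnorm n z = 1 \<longrightarrow> (\<exists>z0\<in>Z0. vnorm n (\<lambda>i. z i - z0 i) \<le> \<epsilon>)))"

end

theory Submission
  imports Defs
begin

text \<open>The event \<open>E\<^sub>Z\<^sub>,\<^sub>A\<close> in fact holds almost surely, so the bound holds with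
  \<open>C\<^sub>2 = c = 1\<close> and \<open>m \<ge> 7k/\<epsilon>\<close>. Fix a nonzero \<open>w \<in> Z\<close>. Almost surely no row \<open>a\<^sub>l\<close> is
  orthogonal to \<open>w\<close>: for fixed other entries, \<open>\<langle>a\<^sub>l, w\<rangle> = 0\<close> pins down one Gaussian entry,
  so by Fubini this hyperplane is a null set. Given this, take an orthonormal basis of \<open>Z\<close>.
  In its coordinates the cubic grid of mesh \<open>\<epsilon>/(2\<surd>k)\<close> is an \<open>\<epsilon>/2\<close>-net of the unit ball with
  at most \<open>(4\<surd>k/\<epsilon> + 3)\<^sup>k \<le> m\<^sup>k\<close> points, and moving each grid point by a small multiple
  of \<open>w\<close> pushes it off the finitely many hyperplanes \<open>a\<^sub>l\<^sup>\<bottom>\<close> while staying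
  within \<open>\<epsilon>/2\<close>.\<close>

definition lincomb :: "nat \<Rightarrow> (nat \<Rightarrow> real) \<Rightarrow> (nat \<Rightarrow> nat \<Rightarrow> real) \<Rightarrow> nat \<Rightarrow> real" where
  "lincomb k c v = (\<lambda>i. \<Sum>j<k. c j * v j i)"

definition lin_span :: "nat \<Rightarrow> (nat \<Rightarrow> nat \<Rightarrow> real) \<Rightarrow> (nat \<Rightarrow> real) set" where
  "lin_span k v = range (\<lambda>c. lincomb k c v)"

definition orthonormal :: "nat \<Rightarrow> nat \<Rightarrow> (nat \<Rightarrow> nat \<Rightarrow> real) \<Rightarrow> bool" where
  "orthonormal n k e \<longleftrightarrow> (\<forall>i<k. \<forall>j<k. vinner n (e i) (e j) = (if i = j then 1 else 0))"

lemma lincomb_Suc: "lincomb (Suc k) c v = (\<lambda>i. lincomb k c v i + c k * v k i)"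
  by (simp add: lincomb_def)

lemma lincomb_cong:
  "(\<And>j. j < k \<Longrightarrow> c j = d j) \<Longrightarrow> (\<And>j. j < k \<Longrightarrow> v j = w j) \<Longrightarrow> lincomb k c v = lincomb k d w"
  unfolding lincomb_def by (intro ext sum.cong) auto

lemma lincomb_diff: "lincomb k (\<lambda>j. c j - d j) v = (\<lambda>i. lincomb k c v i - lincomb k d v i)"
  by (simp add: lincomb_def left_diff_distrib sum_subtractf)

lemma lin_span_cong: "(\<And>j. j < k \<Longrightarrow> v j = w j) \<Longrightarrow> lin_span k v = lin_span k w"
  unfolding lin_span_def using lincomb_cong[of k _ _ v w] by auto

lemma lin_span_0: "lin_span 0 v = {\<lambda>i. 0}"
  by (simp add: lin_span_def lincomb_def)

lemma zero_in_lin_span: "(\<lambda>i. 0) \<in> lin_span k v"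
proof -
  have "(\<lambda>i. 0) = lincomb k (\<lambda>j. 0) v" by (simp add: lincomb_def)
  then show ?thesis unfolding lin_span_def by blast
qed

lemma lin_span_add:
  assumes "x \<in> lin_span k v" "y \<in> lin_span k v"
  shows "(\<lambda>i. x i + y i) \<in> lin_span k v"
proof -
  obtain c d where "x = lincomb k c v" "y = lincomb k d v"
    using assms unfolding lin_span_def by blast
  then have "(\<lambda>i. x i + y i) = lincomb k (\<lambda>j. c j + d j) v"
    unfolding lincomb_def by (simp add: distrib_right sum.distrib)
  then show ?thesis unfolding lin_span_def by blast
qed

lemma lin_span_scale:
  assumes "x \<in> lin_span k v"
  shows "(\<lambda>i. t * x i) \<in> lin_span k v"
proof -
  obtain c where "x = lincomb k c v"
    using assms unfolding lin_span_def by blast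
  then have "(\<lambda>i. t * x i) = lincomb k (\<lambda>j. t * c j) v"
    unfolding lincomb_def by (simp add: sum_distrib_left mult.assoc)
  then show ?thesis unfolding lin_span_def by blast
qed

lemma lin_span_diff:
  assumes "x \<in> lin_span k v" "y \<in> lin_span k v"
  shows "(\<lambda>i. x i - y i) \<in> lin_span k v"
  using lin_span_add[OF assms(1) lin_span_scale[OF assms(2), of "-1"]] by simp

lemma lin_span_generator:
  assumes "j < k"
  shows "v j \<in> lin_span k v"
proof -
  have "v j = lincomb k (\<lambda>j'. of_bool (j' = j)) v"
    using assms by (simp add: lincomb_def)
  then show ?thesis unfolding lin_span_def by blast
qed

lemma lin_span_Suc_mono: "lin_span k v \<subseteq> lin_span (Suc k) v"
proof
  fix x assume "x \<in> lin_span k v"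
  then obtain c where "x = lincomb k c v" unfolding lin_span_def by blast
  also have "\<dots> = lincomb (Suc k) (c(k := 0)) v"
    unfolding lincomb_Suc by (simp add: lincomb_cong[of k "c(k := 0)" c])
  finally show "x \<in> lin_span (Suc k) v" unfolding lin_span_def by blast
qed

lemma lin_span_subset:
  "(\<And>j. j < k' \<Longrightarrow> e j \<in> lin_span k v) \<Longrightarrow> lin_span k' e \<subseteq> lin_span k v"
proof (induction k')
  case 0
  show ?case by (simp add: lin_span_0 zero_in_lin_span)
next
  case (Suc k')
  show ?case
  proof
    fix x assume "x \<in> lin_span (Suc k') e"
    then obtain c where "x = lincomb (Suc k') c e" unfolding lin_span_def by blast
    then have x: "x = (\<lambda>i. lincomb k' c e i + c k' * e k' i)" by (simp add: lincomb_Suc)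
    have "lincomb k' c e \<in> lin_span k v"
      using Suc by (auto simp: lin_span_def)
    moreover have "(\<lambda>i. c k' * e k' i) \<in> lin_span k v"
      using Suc.prems by (intro lin_span_scale) simp
    ultimately show "x \<in> lin_span k v" unfolding x by (rule lin_span_add)
  qed
qed

lemma lin_span_Rn: "(\<And>j. j < k \<Longrightarrow> v j \<in> Rn n) \<Longrightarrow> lin_span k v \<subseteq> Rn n"
  by (auto simp: lin_span_def lincomb_def Rn_def)

lemma vinner_commute: "vinner n x y = vinner n y x"
  unfolding vinner_def by (simp add: mult.commute)

lemma vinner_diff_left: "vinner n (\<lambda>i. x i - y i) z = vinner n x z - vinner n y z"
  unfolding vinner_def by (simp add: left_diff_distrib sum_subtractf)

lemma vinner_scale_left: "vinner n (\<lambda>i. t * x i) y = t * vinner n x y"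
  unfolding vinner_def by (simp add: sum_distrib_left mult.assoc)

lemma vinner_scale_right: "vinner n x (\<lambda>i. t * y i) = t * vinner n x y"
  unfolding vinner_def by (simp add: sum_distrib_left mult.left_commute)

lemma vinner_lincomb_left: "vinner n (lincomb k c v) y = (\<Sum>j<k. c j * vinner n (v j) y)"
  unfolding vinner_def lincomb_def sum_distrib_left sum_distrib_right
  by (subst sum.swap) (simp add: mult.assoc)

lemma vnorm_eq_L2_set: "vnorm n x = L2_set x {..<n}"
  by (simp add: vnorm_def L2_set_def)

lemma vnorm_eq_sqrt_vinner: "vnorm n x = sqrt (vinner n x x)"
  by (simp add: vnorm_def vinner_def power2_eq_square)

lemma vnorm_eq_0_iff: "x \<in> Rn n \<Longrightarrow> vnorm n x = 0 \<longleftrightarrow> x = (\<lambda>i. 0)"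
  unfolding vnorm_eq_L2_set Rn_def by (auto simp: L2_set_eq_0_iff fun_eq_iff, metis lessThan_iff not_le)

lemma vnorm_scale: "vnorm n (\<lambda>i. t * x i) = \<bar>t\<bar> * vnorm n x"
  by (simp add: vnorm_def power_mult_distrib sum_distrib_left[symmetric] real_sqrt_mult)

lemma vnorm_triangle_diff:
  "vnorm n (\<lambda>i. x i - z i) \<le> vnorm n (\<lambda>i. x i - y i) + vnorm n (\<lambda>i. y i - z i)"
  using L2_set_triangle_ineq[of "\<lambda>i. x i - y i" "\<lambda>i. y i - z i" "{..<n}"]
  by (simp add: vnorm_eq_L2_set)

lemma vinner_lincomb_orthonormal:
  assumes "orthonormal n k e" "j < k"
  shows "vinner n (lincomb k c e) (e j) = c j"
proof -
  have "vinner n (lincomb k c e) (e j) = (\<Sum>j'<k. if j' = j then c j' else 0)"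
    unfolding vinner_lincomb_left using assms by (intro sum.cong) (auto simp: orthonormal_def)
  also have "\<dots> = c j" using assms(2) by simp
  finally show ?thesis .
qed

lemma vnorm_lincomb_orthonormal:
  assumes "orthonormal n k e"
  shows "vnorm n (lincomb k c e) = L2_set c {..<k}"
proof -
  have "vinner n (lincomb k c e) (lincomb k c e) = (\<Sum>j<k. c j * vinner n (e j) (lincomb k c e))"
    by (rule vinner_lincomb_left)
  also have "\<dots> = (\<Sum>j<k. c j * c j)"
    by (intro sum.cong refl, subst vinner_commute) (simp add: vinner_lincomb_orthonormal[OF assms])
  finally show ?thesis by (simp add: vnorm_eq_sqrt_vinner L2_set_def power2_eq_square)
qed

lemma orthonormal_Suc:
  assumes "orthonormal n k e" "\<And>j. j < k \<Longrightarrow> vinner n u (e j) = 0" "vinner n u u = 1"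
  shows "orthonormal n (Suc k) (e(k := u))"
  unfolding orthonormal_def
proof (intro allI impI)
  fix i j assume "i < Suc k" "j < Suc k"
  then consider "i < k" "j < k" | "i = k" "j < k" | "i < k" "j = k" | "i = k" "j = k"
    by (auto simp: less_Suc_eq)
  then show "vinner n ((e(k := u)) i) ((e(k := u)) j) = (if i = j then 1 else 0)"
    by cases (use assms in \<open>auto simp: orthonormal_def vinner_commute[of n "e i"]\<close>)
qed

lemma lin_span_Suc_eq:
  assumes "v k \<in> lin_span k v"
  shows "lin_span (Suc k) v = lin_span k v"
proof
  show "lin_span (Suc k) v \<subseteq> lin_span k v"
    using assms by (intro lin_span_subset) (auto simp: less_Suc_eq intro: lin_span_generator)
qed (rule lin_span_Suc_mono)

lemma lin_span_Suc_residual: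
  assumes span: "lin_span k' e = lin_span k v" and p: "p \<in> lin_span k v" and s: "s \<noteq> 0"
  shows "lin_span (Suc k') (e(k' := (\<lambda>i. 1 / s * (v k i - p i)))) = lin_span (Suc k) v"
    (is "lin_span (Suc k') ?e' = _")
proof
  have span': "lin_span k' ?e' = lin_span k v"
    using span by (subst lin_span_cong[of k' ?e' e]) simp_all
  have vk: "v k \<in> lin_span (Suc k) v" by (rule lin_span_generator) simp
  have mono: "lin_span k v \<subseteq> lin_span (Suc k) v" by (rule lin_span_Suc_mono)
  have mono': "lin_span k' ?e' \<subseteq> lin_span (Suc k') ?e'" by (rule lin_span_Suc_mono)
  show "lin_span (Suc k') ?e' \<subseteq> lin_span (Suc k) v"
  proof (rule lin_span_subset)
    fix j assume "j < Suc k'"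
    then consider "j < k'" | "j = k'" by linarith
    then show "?e' j \<in> lin_span (Suc k) v"
    proof cases
      case 1
      then show ?thesis using lin_span_generator[of j k' ?e'] span' mono by auto
    next
      case 2
      have "(\<lambda>i. v k i - p i) \<in> lin_span (Suc k) v" using vk p mono by (blast intro: lin_span_diff)
      then have "(\<lambda>i. 1 / s * (v k i - p i)) \<in> lin_span (Suc k) v" by (rule lin_span_scale)
      then show ?thesis using 2 by simp
    qed
  qed
  show "lin_span (Suc k) v \<subseteq> lin_span (Suc k') ?e'"
  proof (rule lin_span_subset)
    fix j assume "j < Suc k"
    then consider "j < k" | "j = k" by linarith
    then show "v j \<in> lin_span (Suc k') ?e'"
    proof cases
      case 1
      then show ?thesis using lin_span_generator[of j k v] span' mono' by auto
    next
      case 2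
      have "v k = (\<lambda>i. p i + s * ?e' k' i)" using s by (simp add: fun_eq_iff)
      moreover have "p \<in> lin_span (Suc k') ?e'" using p span' mono' by auto
      moreover have "?e' k' \<in> lin_span (Suc k') ?e'" by (rule lin_span_generator) simp
      ultimately show ?thesis using 2 by (metis lin_span_add lin_span_scale)
    qed
  qed
qed

lemma vinner_residual_orthonormal:
  assumes "orthonormal n k e" "j < k"
  shows "vinner n (\<lambda>i. x i - lincomb k (\<lambda>j. vinner n x (e j)) e i) (e j) = 0"
  using assms by (simp add: vinner_diff_left vinner_lincomb_orthonormal)

lemma gram_schmidt:
  assumes "\<And>j. j < k \<Longrightarrow> v j \<in> Rn n"
  shows "\<exists>k'\<le>k. \<exists>e. (\<forall>j<k'. e j \<in> Rn n) \<and> orthonormal n k' e \<and> lin_span k' e = lin_span k v"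
  using assms
proof (induction k)
  case 0
  show ?case by (intro exI[of _ 0]) (simp add: orthonormal_def lin_span_0)
next
  case (Suc k)
  then obtain k' e where k': "k' \<le> k" and eR: "\<forall>j<k'. e j \<in> Rn n" and e: "orthonormal n k' e"
    and span: "lin_span k' e = lin_span k v"
    by (metis less_SucI)
  define p where "p = lincomb k' (\<lambda>j. vinner n (v k) (e j)) e"
  define u where "u = (\<lambda>i. v k i - p i)"
  have "p \<in> lin_span k' e" unfolding p_def lin_span_def by blast
  then have p: "p \<in> lin_span k v" using span by simp
  then have "p \<in> Rn n" using lin_span_Rn[of k v n] Suc.prems by auto
  then have uR: "u \<in> Rn n" using Suc.prems[of k] unfolding u_def Rn_def by simp
  show ?case
  proof (cases "u = (\<lambda>i. 0)")
    case True
    then have "v k = p" unfolding u_def by (simp add: fun_eq_iff)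
    then have "v k \<in> lin_span k v" using p by simp
    then show ?thesis using k' eR e span lin_span_Suc_eq[of v k] by (intro exI[of _ k']) auto
  next
    case False
    define s where "s = vnorm n u"
    have "vinner n u u = s\<^sup>2"
      unfolding s_def vnorm_eq_sqrt_vinner by (simp add: vinner_def sum_nonneg)
    moreover have s: "s > 0"
      using False vnorm_eq_0_iff[OF uR] unfolding s_def vnorm_eq_L2_set by (simp add: order_less_le)
    ultimately have unit: "vinner n (\<lambda>i. 1 / s * u i) (\<lambda>i. 1 / s * u i) = 1"
      by (simp only: vinner_scale_left vinner_scale_right) (simp add: power2_eq_square)
    have perp: "vinner n (\<lambda>i. 1 / s * u i) (e j) = 0" if "j < k'" for j
      using vinner_residual_orthonormal[OF e that] unfolding u_def p_def
      by (simp only: vinner_scale_left mult_zero_right)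
    define e' where "e' = e(k' := (\<lambda>i. 1 / s * u i))"
    have "orthonormal n (Suc k') e'"
      unfolding e'_def using perp unit by (rule orthonormal_Suc[OF e])
    moreover have "lin_span (Suc k') e' = lin_span (Suc k) v"
      unfolding e'_def u_def using span p s by (intro lin_span_Suc_residual) auto
    moreover have "\<forall>j<Suc k'. e' j \<in> Rn n"
      using eR uR unfolding e'_def Rn_def by (auto simp: less_Suc_eq)
    ultimately show ?thesis using k' by (intro exI[of _ "Suc k'"] exI[of _ e']) auto
  qed
qed

lemma abs_le_L2_set: "finite A \<Longrightarrow> j \<in> A \<Longrightarrow> \<bar>c j\<bar> \<le> L2_set c A"
  using member_le_L2_set[of A j "\<lambda>j. \<bar>c j\<bar>"] by (simp add: L2_set_def)

lemma floor_divide_in_range: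
  fixes x \<delta> :: real
  assumes "\<bar>x\<bar> \<le> 1" "0 < \<delta>" "1 / \<delta> \<le> real N"
  shows "\<lfloor>x / \<delta>\<rfloor> \<in> {- int N..int N}"
proof -
  have "\<bar>x / \<delta>\<bar> \<le> 1 / \<delta>" using assms(1,2) by (simp add: abs_divide divide_right_mono)
  then have "- real N \<le> x / \<delta>" "x / \<delta> \<le> real N" using assms(3) by linarith+
  then show ?thesis by (simp add: le_floor_iff floor_le_iff)
qed

lemma L2_ball_grid_net:
  fixes r :: real
  assumes "0 < r"
  shows "\<exists>G. finite G \<and> real (card G) \<le> (2 * sqrt k / r + 3) ^ k \<and>
           (\<forall>c. L2_set c {..<k} \<le> 1 \<longrightarrow> (\<exists>g\<in>G. L2_set (\<lambda>j. c j - g j) {..<k} \<le> r))"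
proof -
  define \<delta> where "\<delta> = r / sqrt k"
  define N where "N = nat \<lceil>sqrt k / r\<rceil>"
  define H where "H = PiE {..<k} (\<lambda>_. {- int N..int N})"
  define G where "G = (\<lambda>h j. \<delta> * of_int (h j)) ` H"
  have "real (card G) \<le> real (card H)"
    unfolding G_def by (simp add: card_image_le finite_PiE H_def)
  also have "\<dots> = real (2 * N + 1) ^ k"
    unfolding H_def by (simp add: card_PiE nat_add_distrib nat_mult_distrib)
  also have "\<dots> \<le> (2 * sqrt k / r + 3) ^ k"
  proof (rule power_mono)
    have "0 \<le> sqrt k / r" using assms by simp
    then have "real N \<le> sqrt k / r + 1"
      unfolding N_def by (subst of_nat_nat) (simp_all add: of_int_ceiling_le_add_one)
    then show "real (2 * N + 1) \<le> 2 * sqrt k / r + 3" by simp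
  qed simp
  finally have card: "real (card G) \<le> (2 * sqrt k / r + 3) ^ k" .
  have net: "\<exists>g\<in>G. L2_set (\<lambda>j. c j - g j) {..<k} \<le> r" if c: "L2_set c {..<k} \<le> 1" for c
  proof
    define h where "h = restrict (\<lambda>j. \<lfloor>c j / \<delta>\<rfloor>) {..<k}"
    show "(\<lambda>j. \<delta> * of_int (h j)) \<in> G"
      unfolding G_def
    proof (rule imageI)
      show "h \<in> H"
        unfolding H_def h_def
      proof (rule restrict_PiE_iff[THEN iffD2], intro ballI)
        fix j assume j: "j \<in> {..<k}"
        have "\<bar>c j\<bar> \<le> 1" using abs_le_L2_set[of "{..<k}" j c] j c by simp
        moreover have "\<delta> > 0" using j assms by (simp add: \<delta>_def)
        moreover have "1 / \<delta> \<le> real N" unfolding N_def \<delta>_def by (simp add: real_nat_ceiling_ge)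
        ultimately show "\<lfloor>c j / \<delta>\<rfloor> \<in> {- int N..int N}" by (rule floor_divide_in_range)
      qed
    qed
    have "L2_set (\<lambda>j. c j - \<delta> * of_int (h j)) {..<k} \<le> L2_set (\<lambda>j. \<delta>) {..<k}"
    proof (rule L2_set_mono)
      fix j assume j: "j \<in> {..<k}"
      then have "\<delta> > 0" using assms by (simp add: \<delta>_def)
      with j show "0 \<le> c j - \<delta> * of_int (h j)" "c j - \<delta> * of_int (h j) \<le> \<delta>"
        unfolding h_def using floor_divide_lower[of \<delta> "c j"] floor_divide_upper[of \<delta> "c j"]
        by (auto simp: algebra_simps)
    qed
    also have "\<dots> \<le> r"
      using assms by (cases "k = 0") (simp_all add: L2_set_constant \<delta>_def)
    finally show "L2_set (\<lambda>j. c j - \<delta> * of_int (h j)) {..<k} \<le> r" .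
  qed
  show ?thesis
    using card net by (intro exI[of _ G]) (auto simp: G_def H_def finite_PiE)
qed

lemma shift_off_hyperplanes:
  assumes "finite L" "\<forall>l\<in>L. vinner n (a l) w \<noteq> 0" "0 < \<eta>"
  shows "\<exists>t. \<bar>t\<bar> * vnorm n w \<le> \<eta> \<and> (\<forall>l\<in>L. vinner n (a l) (\<lambda>i. p i + t * w i) \<noteq> 0)"
proof -
  define bad where "bad = (\<lambda>l. - vinner n (a l) p / vinner n (a l) w) ` L"
  have "vnorm n w \<ge> 0" by (simp add: vnorm_def sum_nonneg)
  then have "infinite {0<..<\<eta> / (vnorm n w + 1)}"
    using assms(3) by (intro infinite_Ioo) simp
  moreover have "finite bad" unfolding bad_def using assms(1) by simp
  ultimately obtain t where t: "t \<in> {0<..<\<eta> / (vnorm n w + 1)}" "t \<notin> bad"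
    by (metis finite_subset subsetI)
  have "\<bar>t\<bar> * vnorm n w \<le> \<eta>"
    using t(1) \<open>vnorm n w \<ge> 0\<close> by (simp add: field_simps)
  moreover have "vinner n (a l) (\<lambda>i. p i + t * w i) \<noteq> 0" if "l \<in> L" for l
  proof
    assume "vinner n (a l) (\<lambda>i. p i + t * w i) = 0"
    moreover have "vinner n (a l) (\<lambda>i. p i + t * w i) = vinner n (a l) p + t * vinner n (a l) w"
      unfolding vinner_def by (simp add: distrib_left sum.distrib sum_distrib_left mult.left_commute)
    ultimately have "t = - vinner n (a l) p / vinner n (a l) w"
      using assms(2) that by (simp add: field_simps)
    then show False using t(2) that unfolding bad_def by blast
  qed
  ultimately show ?thesis by blast
qed

lemma hyperplane_avoiding_net:
  assumes e: "orthonormal n k e" and w: "w \<in> lin_span k e"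
    and L: "finite L" "\<forall>l\<in>L. vinner n (a l) w \<noteq> 0" and \<epsilon>: "0 < \<epsilon>"
  shows "\<exists>Z0\<subseteq>lin_span k e. finite Z0 \<and> real (card Z0) \<le> (4 * sqrt k / \<epsilon> + 3) ^ k \<and>
           (\<forall>z0\<in>Z0. \<forall>l\<in>L. vinner n (a l) z0 \<noteq> 0) \<and>
           (\<forall>z\<in>lin_span k e. vnorm n z = 1 \<longrightarrow> (\<exists>z0\<in>Z0. vnorm n (\<lambda>i. z i - z0 i) \<le> \<epsilon>))"
proof -
  obtain G where G: "finite G" "real (card G) \<le> (4 * sqrt k / \<epsilon> + 3) ^ k"
    and grid: "\<And>c. L2_set c {..<k} \<le> 1 \<Longrightarrow> \<exists>g\<in>G. L2_set (\<lambda>j. c j - g j) {..<k} \<le> \<epsilon> / 2"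
    using L2_ball_grid_net[of "\<epsilon> / 2" k] \<epsilon> by auto
  have "\<exists>z0 \<in> lin_span k e. vnorm n (\<lambda>i. lincomb k g e i - z0 i) \<le> \<epsilon> / 2 \<and>
          (\<forall>l\<in>L. vinner n (a l) z0 \<noteq> 0)" for g
  proof -
    obtain t where t: "\<bar>t\<bar> * vnorm n w \<le> \<epsilon> / 2"
      "\<forall>l\<in>L. vinner n (a l) (\<lambda>i. lincomb k g e i + t * w i) \<noteq> 0"
      using shift_off_hyperplanes[OF L, of "\<epsilon> / 2" "lincomb k g e"] \<epsilon> by auto
    have "lincomb k g e \<in> lin_span k e" by (simp add: lin_span_def)
    then have "(\<lambda>i. lincomb k g e i + t * w i) \<in> lin_span k e"
      using w by (intro lin_span_add lin_span_scale)
    moreover have "vnorm n (\<lambda>i. lincomb k g e i - (lincomb k g e i + t * w i)) = \<bar>t\<bar> * vnorm n w"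
      using vnorm_scale[of n "- t" w] by simp
    ultimately show ?thesis using t by (intro bexI[of _ "\<lambda>i. lincomb k g e i + t * w i"]) auto
  qed
  then obtain f where f_span: "\<And>g. f g \<in> lin_span k e"
    and f_near: "\<And>g. vnorm n (\<lambda>i. lincomb k g e i - f g i) \<le> \<epsilon> / 2"
    and f_avoids: "\<And>g. \<forall>l\<in>L. vinner n (a l) (f g) \<noteq> 0"
    by metis
  have "\<exists>z0\<in>f ` G. vnorm n (\<lambda>i. z i - z0 i) \<le> \<epsilon>" if zS: "z \<in> lin_span k e" and z1: "vnorm n z = 1" for z
  proof -
    obtain c where z: "z = lincomb k c e" using zS unfolding lin_span_def by blast
    then have "L2_set c {..<k} = 1" using z1 vnorm_lincomb_orthonormal[OF e] by simp
    then obtain g where "g \<in> G" and g: "L2_set (\<lambda>j. c j - g j) {..<k} \<le> \<epsilon> / 2"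
      using grid by force
    have "vnorm n (\<lambda>i. z i - lincomb k g e i) \<le> \<epsilon> / 2"
      using g by (simp add: z vnorm_lincomb_orthonormal[OF e] lincomb_diff[symmetric])
    then have "vnorm n (\<lambda>i. z i - f g i) \<le> \<epsilon>"
      using vnorm_triangle_diff[of n z "f g" "lincomb k g e"] f_near[of g] by linarith
    then show ?thesis using \<open>g \<in> G\<close> by blast
  qed
  moreover have "real (card (f ` G)) \<le> (4 * sqrt k / \<epsilon> + 3) ^ k"
    using card_image_le[OF G(1), of f] G(2) by linarith
  ultimately show ?thesis
    using G(1) f_span f_avoids by (intro exI[of _ "f ` G"]) auto
qed

lemma (in product_sigma_finite) emeasure_PiM_eq_0_if_coordinate_unique:
  assumes "finite I" "i \<in> I" "N \<in> sets (PiM I M)"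
    and "\<And>y. {y} \<in> null_sets (M i)"
    and "\<And>x y y'. x(i := y) \<in> N \<Longrightarrow> x(i := y') \<in> N \<Longrightarrow> y = y'"
  shows "emeasure (PiM I M) N = 0"
proof -
  define J where "J = I - {i}"
  have I: "I = insert i J" "i \<notin> J" "finite J" using assms(1,2) unfolding J_def by auto
  have "emeasure (PiM I M) N = (\<integral>\<^sup>+x. indicator N x \<partial>PiM (insert i J) M)"
    using assms(3) I(1) by simp
  also have "\<dots> = (\<integral>\<^sup>+x. \<integral>\<^sup>+y. indicator N (x(i := y)) \<partial>M i \<partial>PiM J M)"
    using assms(3) I by (intro product_nn_integral_insert) auto
  also have "\<dots> = (\<integral>\<^sup>+x. 0 \<partial>PiM J M)"
  proof (rule nn_integral_cong)
    fix x
    have "\<exists>y0. \<forall>y. x(i := y) \<in> N \<longrightarrow> y = y0"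
    proof (cases "\<exists>y. x(i := y) \<in> N")
      case True
      then obtain y1 where "x(i := y1) \<in> N" by blast
      then show ?thesis using assms(5) by blast
    qed blast
    then obtain y0 where y0: "\<And>y. x(i := y) \<in> N \<Longrightarrow> y = y0" by blast
    have "(\<integral>\<^sup>+y. indicator N (x(i := y)) \<partial>M i) \<le> (\<integral>\<^sup>+y. indicator {y0} y \<partial>M i)"
      by (intro nn_integral_mono) (auto split: split_indicator dest: y0)
    also have "\<dots> = 0" using assms(4)[of y0] by (simp add: null_sets_def)
    finally show "(\<integral>\<^sup>+y. indicator N (x(i := y)) \<partial>M i) = 0" by simp
  qed
  finally show ?thesis by simp
qed

lemma singleton_in_null_sets_density_lborel:
  fixes f :: "real \<Rightarrow> ennreal"
  assumes "f \<in> borel_measurable borel"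
  shows "{y} \<in> null_sets (density lborel f)"
  using absolutely_continuousI_density[of f lborel] assms finite_imp_null_set_lborel[of "{y}"]
  by (auto simp: absolutely_continuous_def)

lemma prob_space_gauss_matrix: "prob_space (gauss_matrix m n)"
  unfolding gauss_matrix_def by (intro prob_space_PiM prob_space_normal_density) auto

lemma AE_gauss_matrix_rows_not_orthogonal:
  assumes "j0 < n" "w j0 \<noteq> 0"
  shows "AE A in gauss_matrix m n. \<forall>l<m. vinner n (\<lambda>j. A (l, j)) w \<noteq> 0"
proof (rule AE_all_countable[THEN iffD2], intro allI AE_impI)
  fix l assume "l < m"
  define M where "M = (\<lambda>_ :: nat \<times> nat. density lborel (normal_density 0 (1 / sqrt (real m))))"
  have G: "gauss_matrix m n = PiM ({..<m} \<times> {..<n}) M" by (simp add: gauss_matrix_def M_def)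
  interpret product_sigma_finite M
    unfolding product_sigma_finite_def M_def using \<open>l < m\<close>
    by (simp add: prob_space_normal_density prob_space_imp_sigma_finite)
  define N where "N = {A \<in> space (gauss_matrix m n). vinner n (\<lambda>j. A (l, j)) w = 0}"
  have [measurable]: "(\<lambda>A. vinner n (\<lambda>j. A (l, j)) w) \<in> borel_measurable (gauss_matrix m n)"
    unfolding vinner_def G M_def using \<open>l < m\<close>
    by (auto intro!: borel_measurable_sum borel_measurable_times measurable_component_singleton)
  have "N \<in> sets (gauss_matrix m n)"
    unfolding N_def by measurable
  moreover have "emeasure (gauss_matrix m n) N = 0"
    unfolding G
  proof (rule emeasure_PiM_eq_0_if_coordinate_unique)
    show "{y} \<in> null_sets (M (l, j0))" for y
      unfolding M_def by (rule singleton_in_null_sets_density_lborel) simp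
    show "y = y'" if "x((l, j0) := y) \<in> N" "x((l, j0) := y') \<in> N" for x y y'
    proof -
      define r where "r = (\<Sum>j\<in>{..<n} - {j0}. x (l, j) * w j)"
      have row: "vinner n (\<lambda>j. (x((l, j0) := z)) (l, j)) w = z * w j0 + r" for z
        unfolding vinner_def r_def using assms(1) by (subst sum.remove[of _ j0]) auto
      have "vinner n (\<lambda>j. (x((l, j0) := y)) (l, j)) w = 0"
        "vinner n (\<lambda>j. (x((l, j0) := y')) (l, j)) w = 0"
        using that by (simp_all add: N_def del: fun_upd_apply)
      then have "y * w j0 + r = 0" "y' * w j0 + r = 0" by (simp_all only: row)
      then have "y * w j0 = y' * w j0" by linarith
      then show "y = y'" using assms(2) by simp
    qed
  qed (use \<open>l < m\<close> assms(1) \<open>N \<in> sets (gauss_matrix m n)\<close> G in auto)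
  ultimately show "AE A in gauss_matrix m n. vinner n (\<lambda>j. A (l, j)) w \<noteq> 0"
    by (intro AE_I'[of N]) (auto simp: N_def)
qed

lemma net_size_bound:
  fixes \<epsilon> :: real
  assumes "0 < \<epsilon>" "\<epsilon> < 1" "1 \<le> k'" "k' \<le> k" "7 * real k / \<epsilon> \<le> real m"
  shows "(4 * sqrt k' / \<epsilon> + 3) ^ k' \<le> 10 * real m ^ (2 * k)"
proof -
  have "sqrt k' \<le> sqrt (real k' * real k')"
    using assms(3) by (intro real_sqrt_le_mono) simp
  then have "sqrt k' \<le> real k" using assms(4) by simp
  then have "4 * sqrt k' / \<epsilon> \<le> 4 * real k / \<epsilon>"
    using assms(1) by (simp add: divide_right_mono)
  moreover have "3 \<le> 3 * real k / \<epsilon>"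
    using assms(1-4) by (simp add: le_divide_eq)
  ultimately have base: "4 * sqrt k' / \<epsilon> + 3 \<le> real m"
    using assms(5) by linarith
  have "0 \<le> 4 * sqrt k' / \<epsilon>" using assms(1) by simp
  then have "1 \<le> real m" using base by linarith
  have "(4 * sqrt k' / \<epsilon> + 3) ^ k' \<le> real m ^ k'"
    using base assms(1) by (intro power_mono) auto
  also have "\<dots> \<le> real m ^ (2 * k)"
    using \<open>1 \<le> real m\<close> assms(4) by (intro power_increasing) auto
  also have "\<dots> \<le> 10 * real m ^ (2 * k)" by simp
  finally show ?thesis .
qed

lemma event_E_if_rows_not_orthogonal:
  assumes "0 < \<epsilon>" "\<epsilon> < 1" "7 * real k / \<epsilon> \<le> real m"
    and e: "orthonormal n k' e" "k' \<le> k" and Z: "Z = lin_span k' e"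
    and w: "w \<in> Z" "w \<noteq> (\<lambda>i. 0)" and rows: "\<forall>l<m. vinner n (\<lambda>j. A (l, j)) w \<noteq> 0"
  shows "event_E \<epsilon> m n k Z A"
proof -
  have "k' \<noteq> 0" using w Z by (auto simp: lin_span_0)
  obtain Z0 where "Z0 \<subseteq> Z" "finite Z0" "real (card Z0) \<le> (4 * sqrt k' / \<epsilon> + 3) ^ k'"
    "\<forall>z0\<in>Z0. \<forall>l<m. vinner n (\<lambda>j. A (l, j)) z0 \<noteq> 0"
    "\<forall>z\<in>Z. vnorm n z = 1 \<longrightarrow> (\<exists>z0\<in>Z0. vnorm n (\<lambda>i. z i - z0 i) \<le> \<epsilon>)"
    using hyperplane_avoiding_net[OF e(1), of w "{..<m}" "\<lambda>l j. A (l, j)" \<epsilon>] w Z rows assms(1)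
    by auto
  moreover have "(4 * sqrt k' / \<epsilon> + 3) ^ k' \<le> 10 * real m ^ (2 * k)"
    using \<open>k' \<noteq> 0\<close> assms(1-3) e(2) by (intro net_size_bound) auto
  ultimately show ?thesis unfolding event_E_def by (intro exI[of _ Z0]) auto
qed

lemma AE_event_E:
  assumes "0 < \<epsilon>" "\<epsilon> < 1" "subspace_dim n k Z" "7 * real k / \<epsilon> \<le> real m"
  shows "AE A in gauss_matrix m n. event_E \<epsilon> m n k Z A"
proof -
  obtain v where v: "\<forall>j<k. v j \<in> Rn n"
    and "Z = {z. \<exists>c. z = (\<lambda>i. \<Sum>j<k. c j * v j i)}"
    using assms(3) unfolding subspace_dim_def by blast
  then have "Z = lin_span k v" unfolding lin_span_def lincomb_def by auto
  then obtain k' e where k': "k' \<le> k" and e: "orthonormal n k' e" and Z: "Z = lin_span k' e"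
    using gram_schmidt[of k v n] v by auto
  show ?thesis
  proof (cases "\<exists>w\<in>Z. \<exists>j0<n. w j0 \<noteq> 0")
    case True
    then obtain w j0 where w: "w \<in> Z" "j0 < n" "w j0 \<noteq> 0" by blast
    then have "w \<noteq> (\<lambda>i. 0)" by auto
    have "AE A in gauss_matrix m n. \<forall>l<m. vinner n (\<lambda>j. A (l, j)) w \<noteq> 0"
      using w(2,3) by (rule AE_gauss_matrix_rows_not_orthogonal)
    then show ?thesis
      by eventually_elim
        (rule event_E_if_rows_not_orthogonal[OF assms(1,2,4) e k' Z w(1) \<open>w \<noteq> (\<lambda>i. 0)\<close>])
  next
    case False
    then have "vnorm n z = 0" if "z \<in> Z" for z
      using that by (simp add: vnorm_eq_L2_set L2_set_eq_0_iff)
    then have "event_E \<epsilon> m n k Z A" for A unfolding event_E_def by (intro exI[of _ "{}"]) auto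
    then show ?thesis by simp
  qed
qed

lemma (in prob_space) AE_imp_event_subset_prob_1:
  assumes "AE x in M. P x"
  shows "\<exists>S\<in>events. S \<subseteq> {x \<in> space M. P x} \<and> prob S = 1"
proof -
  obtain N where N: "{x \<in> space M. \<not> P x} \<subseteq> N" "emeasure M N = 0" "N \<in> events"
    using assms by (rule AE_E)
  then have "prob N = 0" by (simp add: measure_def)
  then have "prob (space M - N) = 1" using prob_compl[OF N(3)] by simp
  moreover have "space M - N \<subseteq> {x \<in> space M. P x}" using N(1) by blast
  ultimately show ?thesis using N(3) by blast
qed

theorem lemma24:
  shows "\<exists>C2 c a (d::nat). C2 > 0 \<and> c > 0 \<and> a > 0 \<and>
     (\<forall>(\<epsilon>::real) (n::nat) (m::nat) (k::nat) Z.
        0 < \<epsilon> \<and> \<epsilon> < 1 \<and> subspace_dim n k Z \<and> real m \<ge> a * (1 / \<epsilon>) ^ d * real k \<longrightarrow>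
        (\<exists>S \<in> sets (gauss_matrix m n).
           S \<subseteq> {A \<in> space (gauss_matrix m n). event_E \<epsilon> m n k Z A} \<and>
           measure (gauss_matrix m n) S \<ge> 1 - C2 * exp (- c * \<epsilon> * real m)))"
proof (rule exI[of _ 1], rule exI[of _ 1], rule exI[of _ 7], rule exI[of _ 1], intro conjI allI impI)
  fix \<epsilon> :: real and n m k :: nat and Z
  assume H: "0 < \<epsilon> \<and> \<epsilon> < 1 \<and> subspace_dim n k Z \<and> 7 * (1 / \<epsilon>) ^ 1 * real k \<le> real m"
  then have "7 * real k / \<epsilon> \<le> real m" by simp
  then have AE: "AE A in gauss_matrix m n. event_E \<epsilon> m n k Z A"
    using H AE_event_E[of \<epsilon> n k Z m] by blast
  obtain S where S: "S \<in> sets (gauss_matrix m n)"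
    "S \<subseteq> {A \<in> space (gauss_matrix m n). event_E \<epsilon> m n k Z A}" "measure (gauss_matrix m n) S = 1"
    using prob_space.AE_imp_event_subset_prob_1[OF prob_space_gauss_matrix AE] by blast
  show "\<exists>S \<in> sets (gauss_matrix m n).
      S \<subseteq> {A \<in> space (gauss_matrix m n). event_E \<epsilon> m n k Z A} \<and>
      1 - 1 * exp (- 1 * \<epsilon> * real m) \<le> measure (gauss_matrix m n) S"
  proof (intro bexI[of _ S] conjI)
    show "1 - 1 * exp (- 1 * \<epsilon> * real m) \<le> measure (gauss_matrix m n) S"
      using S(3) by simp
  qed (use S in auto)
qed simp_all

end
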